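(* Let $A$ be an evolution algebra with natural basis $B=\{e_i:i\in\Lambda\}$ and structure matrix $(\omega_{ki})$. A non-zero proper subset $M\subseteq A$ is a modular ideal of $A$ if and only if $M=\mathrm{lin}\{e_j:j\in\Lambda_0\}$ for some non-empty proper subset $\Lambda_0\subseteq\Lambda$ satisfying: (i) $\Lambda\setminus\Lambda_0$ is finite and $\Lambda\setminus\Lambda_0\subseteq\Lambda\setminus D(\Lambda_0)$; (ii) for every $i\in\Lambda\setminus\Lambda_0$, $i\in D(i)$ and $D(i)\setminus\{i\}\subseteq\Lambda_0$. In that case $u=\sum_{i\in\Lambda\setminus\Lambda_0}\frac{1}{\omega_{ii}}e_i$ is a modular unit for $M$.
   Context: An evolution algebra is an algebra $A$ over $\mathbb{K}\in\{\mathbb{R},\mathbb{C}\}$ with a basis $\{e_i:i\in\Lambda\}$ (natural basis) such that $e_ie_j=0$ for $i\neq j$; write $e_i^2=\sum_k\omega_{ki}e_k$. An ideal $M$ is modular if some $u\in A$ (modular unit) satisfies $a-au\in M$ for all $a\in A$. Descendents: $D^1(i)=\{j:\omega_{ji}\neq0\}$, $D^n(i)=\bigcup_{j\in D^{n-1}(i)}D^1(j)$, $D(i)=\bigcup_{n\ge1}D^n(i)$, and for nonempty $\Lambda_0\subseteq\Lambda$, $D(\Lambda_0)=\bigcup_{i\in\Lambda_0}D(i)$. *)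

theory Defs
  imports Complex_Main "HOL-Library.Function_Algebras"
begin

text \<open>
  Evolution algebra over a field 'k (intended: real or complex, class real_normed_field)
  with natural basis indexed by the type 'i (so Lambda = UNIV).
  Elements of A are finitely supported coordinate functions 'i \<Rightarrow> 'k.
  The structure matrix is om :: 'i \<Rightarrow> 'i \<Rightarrow> 'k, where e_i^2 = sum_k om k i e_k.
\<close>

definition evo_carrier :: "('i \<Rightarrow> 'k::field) set" where
  "evo_carrier = {a. finite {i. a i \<noteq> 0}}"

definition basis_vec :: "'i \<Rightarrow> 'i \<Rightarrow> 'k::field" where
  "basis_vec j = (\<lambda>i. if i = j then 1 else 0)"

definition smul :: "'k::field \<Rightarrow> ('i \<Rightarrow> 'k) \<Rightarrow> ('i \<Rightarrow> 'k)" where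
  "smul c a = (\<lambda>i. c * a i)"

text \<open>Bilinear extension of e_i e_j = 0 (i \<noteq> j), e_i e_i = sum_k om k i e_k.\<close>
definition evo_mult :: "('i \<Rightarrow> 'i \<Rightarrow> 'k::field) \<Rightarrow> ('i \<Rightarrow> 'k) \<Rightarrow> ('i \<Rightarrow> 'k) \<Rightarrow> ('i \<Rightarrow> 'k)" where
  "evo_mult om a b = (\<lambda>k. \<Sum>i\<in>{i. a i \<noteq> 0}. a i * b i * om k i)"

definition evo_ideal :: "('i \<Rightarrow> 'i \<Rightarrow> 'k::field) \<Rightarrow> ('i \<Rightarrow> 'k) set \<Rightarrow> bool" where
  "evo_ideal om M \<longleftrightarrow> M \<subseteq> evo_carrier \<and> 0 \<in> M
     \<and> (\<forall>x\<in>M. \<forall>y\<in>M. x + y \<in> M)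
     \<and> (\<forall>c. \<forall>x\<in>M. smul c x \<in> M)
     \<and> (\<forall>a\<in>evo_carrier. \<forall>m\<in>M. evo_mult om a m \<in> M \<and> evo_mult om m a \<in> M)"

definition modular_unit :: "('i \<Rightarrow> 'i \<Rightarrow> 'k::field) \<Rightarrow> ('i \<Rightarrow> 'k) set \<Rightarrow> ('i \<Rightarrow> 'k) \<Rightarrow> bool" where
  "modular_unit om M u \<longleftrightarrow> u \<in> evo_carrier \<and> (\<forall>a\<in>evo_carrier. a - evo_mult om a u \<in> M)"

definition modular_ideal :: "('i \<Rightarrow> 'i \<Rightarrow> 'k::field) \<Rightarrow> ('i \<Rightarrow> 'k) set \<Rightarrow> bool" where
  "modular_ideal om M \<longleftrightarrow> evo_ideal om M \<and> (\<exists>u. modular_unit om M u)"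

definition lin_basis :: "'i set \<Rightarrow> ('i \<Rightarrow> 'k::field) set" where
  "lin_basis L0 = {\<Sum>j\<in>F. smul (c j) (basis_vec j) | F c. finite F \<and> F \<subseteq> L0}"

definition D1 :: "('i \<Rightarrow> 'i \<Rightarrow> 'k::field) \<Rightarrow> 'i \<Rightarrow> 'i set" where
  "D1 om i = {j. om j i \<noteq> 0}"

fun Dn :: "('i \<Rightarrow> 'i \<Rightarrow> 'k::field) \<Rightarrow> nat \<Rightarrow> 'i \<Rightarrow> 'i set" where
  "Dn om 0 i = {}"
| "Dn om (Suc 0) i = D1 om i"
| "Dn om (Suc (Suc n)) i = (\<Union>j\<in>Dn om (Suc n) i. D1 om j)"

definition Desc :: "('i \<Rightarrow> 'i \<Rightarrow> 'k::field) \<Rightarrow> 'i \<Rightarrow> 'i set" where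
  "Desc om i = (\<Union>n\<in>{1..}. Dn om n i)"

definition Desc_set :: "('i \<Rightarrow> 'i \<Rightarrow> 'k::field) \<Rightarrow> 'i set \<Rightarrow> 'i set" where
  "Desc_set om L0 = (\<Union>i\<in>L0. Desc om i)"

end

theory Submission imports Defs begin

text \<open>
  Conditions (i) and (ii) together say precisely that for every k outside \<open>\<Lambda>\<^sub>0\<close> the
  k-th row of the structure matrix is nonzero exactly on the diagonal: \<open>e\<^sub>k\<close> occurs in
  \<open>e\<^sub>k\<^sup>2\<close> and in no other \<open>e\<^sub>j\<^sup>2\<close>. Under this condition \<open>lin{e\<^sub>j : j \<in> \<Lambda>\<^sub>0}\<close> is an ideal,
  and the k-th coordinate of au is \<open>a\<^sub>k (1/\<omega>\<^sub>k\<^sub>k) \<omega>\<^sub>k\<^sub>k = a\<^sub>k\<close>, so \<open>a - au \<in> M\<close>.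
  Conversely, a modular ideal M with unit u contains \<open>e\<^sub>j - u\<^sub>j \<omega>\<^sub>\<bullet>\<^sub>j\<close> for every j, and
  contains the column \<open>\<omega>\<^sub>\<bullet>\<^sub>j\<close> as soon as some \<open>m \<in> M\<close> has \<open>m\<^sub>j \<noteq> 0\<close>; together these put
  \<open>e\<^sub>j\<close> in M. So M is spanned by the basis vectors it contains, and the coordinates of
  \<open>e\<^sub>j - u\<^sub>j \<omega>\<^sub>\<bullet>\<^sub>j\<close> outside \<open>\<Lambda>\<^sub>0\<close> give the row condition together with \<open>u\<^sub>j \<noteq> 0\<close> for
  \<open>j \<notin> \<Lambda>\<^sub>0\<close>, whence \<open>\<Lambda> \<setminus> \<Lambda>\<^sub>0\<close> is finite.
\<close>

definition diagonal_row :: "('i \<Rightarrow> 'i \<Rightarrow> 'k::field) \<Rightarrow> 'i \<Rightarrow> bool" where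
  "diagonal_row om k \<longleftrightarrow> (\<forall>j. om k j \<noteq> 0 \<longleftrightarrow> j = k)"

lemma diagonal_row_off_diagonal: "diagonal_row om k \<Longrightarrow> j \<noteq> k \<Longrightarrow> om k j = 0"
  unfolding diagonal_row_def by blast

lemma D1_subset_Desc: "D1 om i \<subseteq> Desc om i"
proof -
  have "Dn om 1 i \<subseteq> Desc om i" unfolding Desc_def by (rule UN_upper) simp
  then show ?thesis by (simp only: One_nat_def Dn.simps)
qed

lemma Desc_subset_if_D1_closed:
  assumes "D1 om i \<subseteq> P" and "\<forall>j\<in>P. D1 om j \<subseteq> P"
  shows "Desc om i \<subseteq> P"
proof -
  have Dn_Suc: "Dn om (Suc n) i \<subseteq> P" for n
    by (induction n) (use assms in auto)
  show ?thesis unfolding Desc_def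
  proof (rule UN_least)
    fix n :: nat assume "n \<in> {1..}"
    then obtain m where "n = Suc m" by (cases n) auto
    with Dn_Suc show "Dn om n i \<subseteq> P" by simp
  qed
qed

lemma Desc_set_subset_iff: "Desc_set om L \<subseteq> L \<longleftrightarrow> (\<forall>j\<in>L. D1 om j \<subseteq> L)"
proof
  assume "Desc_set om L \<subseteq> L"
  moreover have "D1 om j \<subseteq> Desc_set om L" if "j \<in> L" for j
    using D1_subset_Desc[of om j] that unfolding Desc_set_def by blast
  ultimately show "\<forall>j\<in>L. D1 om j \<subseteq> L" by blast
next
  assume "\<forall>j\<in>L. D1 om j \<subseteq> L"
  then have "Desc om j \<subseteq> L" if "j \<in> L" for j
    using that by (intro Desc_subset_if_D1_closed) auto
  then show "Desc_set om L \<subseteq> L" unfolding Desc_set_def by blast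
qed

lemma descendent_conditions_iff_diagonal_rows:
  "(UNIV - L \<subseteq> UNIV - Desc_set om L \<and> (\<forall>i\<in>UNIV - L. i \<in> Desc om i \<and> Desc om i - {i} \<subseteq> L))
   \<longleftrightarrow> (\<forall>k\<in>UNIV - L. diagonal_row om k)"
proof
  assume conds: "UNIV - L \<subseteq> UNIV - Desc_set om L \<and> (\<forall>i\<in>UNIV - L. i \<in> Desc om i \<and> Desc om i - {i} \<subseteq> L)"
  then have "Desc_set om L \<subseteq> L" by blast
  then have closed: "\<forall>j\<in>L. D1 om j \<subseteq> L" by (simp add: Desc_set_subset_iff)
  have D1_outside: "D1 om i \<subseteq> insert i L" if "i \<notin> L" for i
  proof -
    have "Desc om i - {i} \<subseteq> L" using conds that by blast
    then show ?thesis using D1_subset_Desc[of om i] by blast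
  qed
  have "i \<in> D1 om i" if i: "i \<notin> L" for i
  proof (rule ccontr)
    assume "i \<notin> D1 om i"
    then have "D1 om i \<subseteq> L" using D1_outside[OF i] by blast
    then have "Desc om i \<subseteq> L" using closed by (rule Desc_subset_if_D1_closed)
    moreover have "i \<in> Desc om i" using conds i by blast
    ultimately show False using i by blast
  qed
  with closed D1_outside show "\<forall>k\<in>UNIV - L. diagonal_row om k"
    unfolding diagonal_row_def D1_def by blast
next
  assume rows: "\<forall>k\<in>UNIV - L. diagonal_row om k"
  then have D1_outside: "D1 om j \<subseteq> insert j L" for j
    by (auto simp: D1_def diagonal_row_def)
  then have closed: "\<forall>j\<in>L. D1 om j \<subseteq> L" by blast
  have "i \<in> Desc om i \<and> Desc om i - {i} \<subseteq> L" if i: "i \<notin> L" for i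
  proof -
    have "i \<in> D1 om i" using rows i by (simp add: D1_def diagonal_row_def)
    moreover have "\<forall>j\<in>insert i L. D1 om j \<subseteq> insert i L" using D1_outside closed by blast
    then have "Desc om i \<subseteq> insert i L" using D1_outside by (rule Desc_subset_if_D1_closed[rotated])
    ultimately show ?thesis using D1_subset_Desc[of om i] by blast
  qed
  moreover have "Desc_set om L \<subseteq> L" using closed by (simp add: Desc_set_subset_iff)
  ultimately show "UNIV - L \<subseteq> UNIV - Desc_set om L \<and> (\<forall>i\<in>UNIV - L. i \<in> Desc om i \<and> Desc om i - {i} \<subseteq> L)"
    by blast
qed

lemma sum_smul_basis_vec_apply:
  "finite F \<Longrightarrow> (\<Sum>j\<in>F. smul (c j) (basis_vec j)) i = (if i \<in> F then c i else (0::'k::field))"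
  by (induction F rule: finite_induct) (auto simp: smul_def basis_vec_def)

lemma basis_vec_in_carrier: "basis_vec j \<in> evo_carrier"
  by (simp add: evo_carrier_def basis_vec_def)

lemma diff_in_carrier: "a \<in> evo_carrier \<Longrightarrow> b \<in> evo_carrier \<Longrightarrow> a - b \<in> evo_carrier"
  unfolding evo_carrier_def
  by (rule CollectI, rule finite_subset[of _ "{i. a i \<noteq> 0} \<union> {i. b i \<noteq> 0}"]) auto

lemma mem_lin_basis_iff: "a \<in> lin_basis L \<longleftrightarrow> a \<in> evo_carrier \<and> (\<forall>i. i \<notin> L \<longrightarrow> a i = 0)"
proof
  assume "a \<in> lin_basis L"
  then obtain F c where a: "a = (\<Sum>j\<in>F. smul (c j) (basis_vec j))" and F: "finite F" "F \<subseteq> L"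
    unfolding lin_basis_def by blast
  then have "{i. a i \<noteq> 0} \<subseteq> F" by (auto simp: sum_smul_basis_vec_apply)
  with F a show "a \<in> evo_carrier \<and> (\<forall>i. i \<notin> L \<longrightarrow> a i = 0)"
    by (auto simp: evo_carrier_def sum_smul_basis_vec_apply intro: finite_subset)
next
  assume a: "a \<in> evo_carrier \<and> (\<forall>i. i \<notin> L \<longrightarrow> a i = 0)"
  then have fin: "finite {i. a i \<noteq> 0}" by (simp add: evo_carrier_def)
  then have "a = (\<Sum>j\<in>{i. a i \<noteq> 0}. smul (a j) (basis_vec j))"
    by (auto simp: fun_eq_iff sum_smul_basis_vec_apply)
  moreover have "{i. a i \<noteq> 0} \<subseteq> L" using a by auto
  ultimately show "a \<in> lin_basis L" unfolding lin_basis_def using fin by blast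
qed

lemma lin_basis_empty: "lin_basis {} = {0}"
  by (auto simp: mem_lin_basis_iff evo_carrier_def fun_eq_iff)

lemma lin_basis_UNIV: "lin_basis UNIV = evo_carrier"
  by (auto simp: mem_lin_basis_iff)

lemma evo_mult_eq_sum_superset:
  assumes "finite S" and "{i. a i \<noteq> 0} \<subseteq> S"
  shows "evo_mult om a b k = (\<Sum>i\<in>S. a i * b i * om k i)"
  unfolding evo_mult_def using assms by (intro sum.mono_neutral_left) auto

lemma evo_mult_basis_vec_left: "evo_mult om (basis_vec j) b = (\<lambda>k. b j * om k j)"
proof
  fix k
  have "evo_mult om (basis_vec j) b k = (\<Sum>i\<in>{j}. basis_vec j i * b i * om k i)"
    by (rule evo_mult_eq_sum_superset) (auto simp: basis_vec_def)
  then show "evo_mult om (basis_vec j) b k = b j * om k j" by (simp add: basis_vec_def)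
qed

lemma evo_mult_apply_diagonal_row:
  assumes "finite {i. a i \<noteq> 0}" and "diagonal_row om k"
  shows "evo_mult om a b k = a k * b k * om k k"
proof -
  have "evo_mult om a b k = (\<Sum>i\<in>insert k {i. a i \<noteq> 0}. a i * b i * om k i)"
    using assms(1) by (intro evo_mult_eq_sum_superset) auto
  also have "\<dots> = (\<Sum>i\<in>{k}. a i * b i * om k i)"
    using assms by (intro sum.mono_neutral_right) (auto simp: diagonal_row_def)
  also have "\<dots> = a k * b k * om k k" by simp
  finally show ?thesis .
qed

lemma evo_mult_in_carrier:
  assumes "\<forall>i. finite {k. om k i \<noteq> 0}" and "a \<in> evo_carrier"
  shows "evo_mult om a b \<in> evo_carrier"
proof -
  have "{k. evo_mult om a b k \<noteq> 0} \<subseteq> (\<Union>i\<in>{i. a i \<noteq> 0}. {k. om k i \<noteq> 0})"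
  proof
    fix k assume "k \<in> {k. evo_mult om a b k \<noteq> 0}"
    then have "(\<Sum>i\<in>{i. a i \<noteq> 0}. a i * b i * om k i) \<noteq> 0" by (simp add: evo_mult_def)
    then obtain i where "a i \<noteq> 0" "a i * b i * om k i \<noteq> 0"
      by (rule sum.not_neutral_contains_not_neutral) auto
    then show "k \<in> (\<Union>i\<in>{i. a i \<noteq> 0}. {k. om k i \<noteq> 0})" by auto
  qed
  moreover have "finite (\<Union>i\<in>{i. a i \<noteq> 0}. {k. om k i \<noteq> 0})"
    using assms by (auto simp: evo_carrier_def)
  ultimately show ?thesis unfolding evo_carrier_def using finite_subset by blast
qed

subsection \<open>Sufficiency\<close>

lemma evo_ideal_lin_basis:
  fixes om :: "'i \<Rightarrow> 'i \<Rightarrow> 'k::field"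
  assumes evo: "\<forall>i. finite {k. om k i \<noteq> 0}"
    and closed: "\<And>j k. j \<in> L \<Longrightarrow> k \<notin> L \<Longrightarrow> om k j = 0"
  shows "evo_ideal om (lin_basis L)"
proof -
  have mult_mem: "evo_mult om a b \<in> lin_basis L"
    if carrier: "a \<in> evo_carrier" and vanish: "\<And>i. i \<notin> L \<Longrightarrow> a i * b i = 0" for a b
    unfolding mem_lin_basis_iff
  proof (intro conjI allI impI)
    show "evo_mult om a b \<in> evo_carrier" using evo carrier by (rule evo_mult_in_carrier)
    fix k assume k: "k \<notin> L"
    have term_zero: "a i * b i * om k i = 0" for i
      using closed[OF _ k, of i] vanish[of i] by (cases "i \<in> L") simp_all
    show "evo_mult om a b k = 0" by (simp add: evo_mult_def term_zero)
  qed
  show ?thesis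
    unfolding evo_ideal_def
  proof (intro conjI ballI allI)
    show "lin_basis L \<subseteq> evo_carrier" by (auto simp: mem_lin_basis_iff)
    show "0 \<in> lin_basis L" by (simp add: mem_lin_basis_iff evo_carrier_def)
  next
    fix x y :: "'i \<Rightarrow> 'k" assume "x \<in> lin_basis L" "y \<in> lin_basis L"
    then show "x + y \<in> lin_basis L"
      unfolding mem_lin_basis_iff evo_carrier_def
      by (auto intro: finite_subset[of _ "{i. x i \<noteq> 0} \<union> {i. y i \<noteq> 0}"])
  next
    fix c and x :: "'i \<Rightarrow> 'k" assume "x \<in> lin_basis L"
    then show "smul c x \<in> lin_basis L"
      unfolding mem_lin_basis_iff evo_carrier_def smul_def
      by (auto intro: finite_subset[of _ "{i. x i \<noteq> 0}"])
  next
    fix a m :: "'i \<Rightarrow> 'k" assume a: "a \<in> evo_carrier" and "m \<in> lin_basis L"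
    then have m_carrier: "m \<in> evo_carrier" and m_zero: "\<And>i. i \<notin> L \<Longrightarrow> m i = 0"
      by (auto simp: mem_lin_basis_iff)
    show "evo_mult om a m \<in> lin_basis L" using a by (rule mult_mem) (simp add: m_zero)
    show "evo_mult om m a \<in> lin_basis L" using m_carrier by (rule mult_mem) (simp add: m_zero)
  qed
qed

lemma modular_unit_lin_basis:
  fixes om :: "'i \<Rightarrow> 'i \<Rightarrow> 'k::field"
  assumes evo: "\<forall>i. finite {k. om k i \<noteq> 0}"
    and fin: "finite (UNIV - L)"
    and rows: "\<forall>k\<in>UNIV - L. diagonal_row om k"
  shows "modular_unit om (lin_basis L) (\<Sum>i\<in>UNIV - L. smul (1 / om i i) (basis_vec i))"
    (is "modular_unit _ _ ?u")
proof -
  have u_apply: "?u k = (if k \<in> UNIV - L then 1 / om k k else 0)" for k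
    using fin by (rule sum_smul_basis_vec_apply)
  have "{k. ?u k \<noteq> 0} \<subseteq> UNIV - L" by (auto simp: u_apply split: if_splits)
  then have u_carrier: "?u \<in> evo_carrier"
    unfolding evo_carrier_def using finite_subset fin by blast
  have "a - evo_mult om a ?u \<in> lin_basis L" if a: "a \<in> evo_carrier" for a
    unfolding mem_lin_basis_iff
  proof (intro conjI allI impI)
    show "a - evo_mult om a ?u \<in> evo_carrier"
      using a evo_mult_in_carrier[OF evo a] by (rule diff_in_carrier)
    fix k assume k: "k \<notin> L"
    then have row: "diagonal_row om k" using rows by blast
    then have "om k k \<noteq> 0" by (simp add: diagonal_row_def)
    moreover have "evo_mult om a ?u k = a k * ?u k * om k k"
      using a row unfolding evo_carrier_def by (simp add: evo_mult_apply_diagonal_row)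
    ultimately show "(a - evo_mult om a ?u) k = 0" using k by (simp add: u_apply)
  qed
  with u_carrier show ?thesis by (simp add: modular_unit_def)
qed

subsection \<open>Necessity\<close>

lemma modular_unit_residue_basis_vec:
  assumes "modular_unit om M u"
  shows "basis_vec j - (\<lambda>k. u j * om k j) \<in> M"
proof -
  have "\<forall>a\<in>evo_carrier. a - evo_mult om a u \<in> M"
    using assms by (simp add: modular_unit_def)
  from bspec[OF this basis_vec_in_carrier] show ?thesis by (simp add: evo_mult_basis_vec_left)
qed

lemma evo_idealD:
  assumes "evo_ideal om M"
  shows "M \<subseteq> evo_carrier" and "0 \<in> M"
    and "x \<in> M \<Longrightarrow> y \<in> M \<Longrightarrow> x + y \<in> M" and "x \<in> M \<Longrightarrow> smul c x \<in> M"
    and "a \<in> evo_carrier \<Longrightarrow> m \<in> M \<Longrightarrow> evo_mult om a m \<in> M"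
  using assms unfolding evo_ideal_def by blast+

lemma column_mem_if_basis_vec_mem:
  assumes "evo_ideal om M" and "basis_vec j \<in> M"
  shows "(\<lambda>i. om i j) \<in> M"
proof -
  have "evo_mult om (basis_vec j) (basis_vec j) \<in> M"
    using evo_idealD(5)[OF assms(1) basis_vec_in_carrier assms(2)] .
  then show ?thesis unfolding evo_mult_basis_vec_left by (simp add: basis_vec_def)
qed

lemma basis_vec_mem_if_coordinate_nonzero:
  assumes ideal: "evo_ideal om M" and unit: "modular_unit om M u"
    and m: "m \<in> M" "m j \<noteq> 0"
  shows "basis_vec j \<in> M"
proof -
  have "evo_mult om (basis_vec j) m \<in> M"
    using ideal basis_vec_in_carrier m(1) by (rule evo_idealD)
  then have "(\<lambda>k. m j * om k j) \<in> M" by (simp add: evo_mult_basis_vec_left)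
  from evo_idealD(4)[OF ideal this, of "1 / m j"] have column: "(\<lambda>k. om k j) \<in> M"
    using m(2) by (simp add: smul_def)
  from evo_idealD(3)[OF ideal modular_unit_residue_basis_vec[OF unit, of j]
      evo_idealD(4)[OF ideal column, of "u j"]]
  show ?thesis by (simp add: smul_def)
qed

lemma evo_ideal_eq_lin_basis:
  assumes ideal: "evo_ideal om M"
    and basis_mem: "\<And>m j. m \<in> M \<Longrightarrow> m j \<noteq> 0 \<Longrightarrow> basis_vec j \<in> M"
  shows "M = lin_basis {j. basis_vec j \<in> M}"
proof
  show "M \<subseteq> lin_basis {j. basis_vec j \<in> M}"
  proof
    fix x assume x: "x \<in> M"
    then have "x \<in> evo_carrier" using evo_idealD(1)[OF ideal] by blast
    moreover have "x i = 0" if "i \<notin> {j. basis_vec j \<in> M}" for i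
      using basis_mem[OF x, of i] that by blast
    ultimately show "x \<in> lin_basis {j. basis_vec j \<in> M}" by (simp add: mem_lin_basis_iff)
  qed
  have "(\<Sum>j\<in>F. smul (c j) (basis_vec j)) \<in> M" if "finite F" "F \<subseteq> {j. basis_vec j \<in> M}" for F c
    using that
  proof (induction F rule: finite_induct)
    case empty
    then show ?case using evo_idealD(2)[OF ideal] by (simp add: zero_fun_def)
  next
    case (insert j F)
    have "smul (c j) (basis_vec j) \<in> M" using insert.prems by (intro evo_idealD(4)[OF ideal]) simp
    moreover have "(\<Sum>j\<in>F. smul (c j) (basis_vec j)) \<in> M" using insert by simp
    ultimately show ?case
      unfolding sum.insert[OF insert.hyps(1,2)] by (rule evo_idealD(3)[OF ideal])
  qed
  then show "lin_basis {j. basis_vec j \<in> M} \<subseteq> M"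
    unfolding lin_basis_def by blast
qed

lemma modular_unit_coordinate_nonzero:
  fixes om :: "'i \<Rightarrow> 'i \<Rightarrow> 'k::field"
  assumes unit: "modular_unit om (lin_basis L) u" and j: "j \<notin> L"
  shows "u j \<noteq> 0"
proof
  assume "u j = 0"
  then have "(basis_vec j :: 'i \<Rightarrow> 'k) \<in> lin_basis L"
    using modular_unit_residue_basis_vec[OF unit, of j] by (simp add: fun_diff_def)
  then have "(basis_vec j :: 'i \<Rightarrow> 'k) j = 0" using j by (simp add: mem_lin_basis_iff)
  then show False by (simp add: basis_vec_def)
qed

lemma diagonal_row_if_modular_unit:
  fixes om :: "'i \<Rightarrow> 'i \<Rightarrow> 'k::field"
  assumes ideal: "evo_ideal om (lin_basis L)" and unit: "modular_unit om (lin_basis L) u"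
    and k: "k \<notin> L"
  shows "diagonal_row om k"
proof -
  have outside_zero: "x k = 0" if "x \<in> lin_basis L" for x :: "'i \<Rightarrow> 'k"
    using that k by (simp add: mem_lin_basis_iff)
  note residue = modular_unit_residue_basis_vec[OF unit]
  have "j = k" if om: "om k j \<noteq> 0" for j
  proof (rule ccontr)
    assume "j \<noteq> k"
    then have "u j * om k j = 0"
      using outside_zero[OF residue[of j]] by (simp add: basis_vec_def)
    moreover have "j \<notin> L"
    proof
      assume "j \<in> L"
      then have "(basis_vec j :: 'i \<Rightarrow> 'k) \<in> lin_basis L"
        unfolding mem_lin_basis_iff using basis_vec_in_carrier by (auto simp: basis_vec_def)
      from outside_zero[OF column_mem_if_basis_vec_mem[OF ideal this]] om show False by simp
    qed
    ultimately show False using modular_unit_coordinate_nonzero[OF unit] om by simp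
  qed
  moreover have "om k k \<noteq> 0"
    using outside_zero[OF residue[of k]] by (auto simp: basis_vec_def)
  ultimately show ?thesis unfolding diagonal_row_def by blast
qed

lemma modular_ideal_eq_lin_basis_diagonal_rows:
  assumes "modular_ideal om M"
  obtains L where "M = lin_basis L" "finite (UNIV - L)" "\<forall>k\<in>UNIV - L. diagonal_row om k"
proof -
  obtain u where ideal: "evo_ideal om M" and unit: "modular_unit om M u"
    using assms by (auto simp: modular_ideal_def)
  define L where "L = {j. basis_vec j \<in> M}"
  have M_eq: "M = lin_basis L"
    unfolding L_def using ideal by (rule evo_ideal_eq_lin_basis)
      (rule basis_vec_mem_if_coordinate_nonzero[OF ideal unit])
  from ideal unit have ideal_L: "evo_ideal om (lin_basis L)" and unit_L: "modular_unit om (lin_basis L) u"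
    unfolding M_eq .
  have "finite {j. u j \<noteq> 0}" using unit by (simp add: modular_unit_def evo_carrier_def)
  moreover have "UNIV - L \<subseteq> {j. u j \<noteq> 0}"
    using modular_unit_coordinate_nonzero[OF unit_L] by blast
  ultimately have "finite (UNIV - L)" by (rule finite_subset[rotated])
  moreover have "\<forall>k\<in>UNIV - L. diagonal_row om k"
    using diagonal_row_if_modular_unit[OF ideal_L unit_L] by blast
  ultimately show ?thesis using M_eq that by blast
qed

theorem corollary3p7:
  fixes om :: "'i \<Rightarrow> 'i \<Rightarrow> 'k::real_normed_field"
    and M :: "('i \<Rightarrow> 'k) set"
  assumes evo: "\<forall>i. finite {k. om k i \<noteq> 0}"
    and sub: "M \<subseteq> evo_carrier" \<comment> \<open>not needed: ideals lie in the carrier by definition\<close>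
    and nonzero: "M \<noteq> {0}"
    and proper: "M \<noteq> evo_carrier"
  shows "(modular_ideal om M \<longleftrightarrow>
           (\<exists>L0. L0 \<noteq> {} \<and> L0 \<noteq> UNIV \<and> M = lin_basis L0
              \<and> finite (UNIV - L0) \<and> UNIV - L0 \<subseteq> UNIV - Desc_set om L0
              \<and> (\<forall>i\<in>UNIV - L0. i \<in> Desc om i \<and> Desc om i - {i} \<subseteq> L0)))
       \<and> (\<forall>L0. L0 \<noteq> {} \<and> L0 \<noteq> UNIV \<and> M = lin_basis L0
              \<and> finite (UNIV - L0) \<and> UNIV - L0 \<subseteq> UNIV - Desc_set om L0
              \<and> (\<forall>i\<in>UNIV - L0. i \<in> Desc om i \<and> Desc om i - {i} \<subseteq> L0)
            \<longrightarrow> modular_unit om M (\<Sum>i\<in>UNIV - L0. smul (1 / om i i) (basis_vec i)))"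
  unfolding descendent_conditions_iff_diagonal_rows
proof (intro conjI iffI allI impI)
  assume "modular_ideal om M"
  then obtain L where L: "M = lin_basis L" "finite (UNIV - L)" "\<forall>k\<in>UNIV - L. diagonal_row om k"
    by (rule modular_ideal_eq_lin_basis_diagonal_rows)
  moreover have "L \<noteq> {}"
    using nonzero unfolding L(1) by (rule contrapos_nn) (simp add: lin_basis_empty)
  moreover have "L \<noteq> UNIV"
    using proper unfolding L(1) by (rule contrapos_nn) (simp add: lin_basis_UNIV)
  ultimately show "\<exists>L. L \<noteq> {} \<and> L \<noteq> UNIV \<and> M = lin_basis L \<and> finite (UNIV - L)
      \<and> (\<forall>k\<in>UNIV - L. diagonal_row om k)" by (intro exI[of _ L]) simp
next
  assume "\<exists>L. L \<noteq> {} \<and> L \<noteq> UNIV \<and> M = lin_basis L \<and> finite (UNIV - L)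
      \<and> (\<forall>k\<in>UNIV - L. diagonal_row om k)"
  then obtain L where L: "M = lin_basis L" "finite (UNIV - L)" "\<forall>k\<in>UNIV - L. diagonal_row om k"
    by auto
  have "om k j = 0" if "j \<in> L" "k \<notin> L" for j k
  proof (rule diagonal_row_off_diagonal[of om k j])
    show "diagonal_row om k" using L(3) that(2) by simp
    show "j \<noteq> k" using that by auto
  qed
  then have "evo_ideal om (lin_basis L)" by (rule evo_ideal_lin_basis[OF evo])
  moreover have "modular_unit om (lin_basis L) (\<Sum>i\<in>UNIV - L. smul (1 / om i i) (basis_vec i))"
    using L(2,3) by (rule modular_unit_lin_basis[OF evo])
  ultimately show "modular_ideal om M" unfolding modular_ideal_def L(1) by auto
next
  fix L assume "L \<noteq> {} \<and> L \<noteq> UNIV \<and> M = lin_basis L \<and> finite (UNIV - L)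
      \<and> (\<forall>k\<in>UNIV - L. diagonal_row om k)"
  then show "modular_unit om M (\<Sum>i\<in>UNIV - L. smul (1 / om i i) (basis_vec i))"
    using modular_unit_lin_basis[OF evo] by simp
qed

end
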